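(* Suppose $x_j(0)=y_j(0)=0$ for all individuals $j=1,\dots,n$, and let $i$ be an individual with $\alpha_i=\min_j\alpha_j$. If individual $i$ acts for the first time at time $t$, then every other individual has acted (for the first time) at some time $\le t$. Equivalently, an individual with larger $\alpha$ takes its first action no later than an individual with smaller $\alpha$.
   Context: Model: Fix an integer $n\ge 2$ (number of individuals) and parameters $\sigma_A,\sigma_S\ge 0$, $\sigma_C>0$, $\mu_S\in[0,1]$, $\mu_C>0$, $r>0$, $\tau\in(0,1)$, $\alpha_1,\dots,\alpha_n\in(-1,1)$. Individual $i$ has state $(x_i(t),y_i(t))$, $x_i\in(-1,1)$, $y_i\in[0,1]$, and $\gamma_i(t)=\frac{1}{n-1}\sum_{j\neq i}y_j(t)$. Between action events the state evolves by $\dot x_i=[\sigma_A\alpha_i+\sigma_S(\gamma_i-\mu_S)]\,\sigma_C(\gamma_i+\mu_C)(1-x_i)(1+x_i)$, $\dot y_i=-ry_i$. Individual $i$ "acts" at a time $t$ when $x_i(t)$ reaches the threshold $\tau$ (i.e. $x_i(t)\ge\tau$); immediately afterwards $x_i$ is reset to $0$ and $y_i$ is reset to $1$, and the continuous evolution resumes from the new state. *)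

theory Defs
  imports "HOL-Analysis.Analysis"
begin

text \<open>Individuals are indexed by 0, ..., n-1. The state of individual i at time s is
  (x i s, y i s); trajectories are right-continuous (the value at an action time is the
  post-reset value).\<close>

definition gamma :: "nat \<Rightarrow> (nat \<Rightarrow> real \<Rightarrow> real) \<Rightarrow> nat \<Rightarrow> real \<Rightarrow> real" where
  "gamma n y i s = (1 / (real n - 1)) * (\<Sum>j\<in>{..<n} - {i}. y j s)"

definition xrate ::
  "real \<Rightarrow> real \<Rightarrow> real \<Rightarrow> real \<Rightarrow> real \<Rightarrow> real \<Rightarrow> real \<Rightarrow> real \<Rightarrow> real" where
  "xrate sA sS sC muS muC a g xv =
     (sA * a + sS * (g - muS)) * sC * (g + muC) * (1 - xv) * (1 + xv)"

definition acts :: "(nat \<Rightarrow> real \<Rightarrow> real) \<Rightarrow> real \<Rightarrow> nat \<Rightarrow> real \<Rightarrow> bool" where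
  "acts x tau i s \<longleftrightarrow> 0 < s \<and> (x i \<longlongrightarrow> tau) (at_left s)"

definition trajectory ::
  "nat \<Rightarrow> real \<Rightarrow> real \<Rightarrow> real \<Rightarrow> real \<Rightarrow> real \<Rightarrow> real \<Rightarrow> real \<Rightarrow> (nat \<Rightarrow> real)
   \<Rightarrow> (nat \<Rightarrow> real) \<Rightarrow> (nat \<Rightarrow> real)
   \<Rightarrow> (nat \<Rightarrow> real \<Rightarrow> real) \<Rightarrow> (nat \<Rightarrow> real \<Rightarrow> real) \<Rightarrow> bool" where
  "trajectory n sA sS sC muS muC r tau alpha x0 y0 x y \<longleftrightarrow>
     (\<forall>i<n. x i 0 = x0 i \<and> y i 0 = y0 i) \<and>
     (\<forall>i<n. \<forall>s\<ge>0. x i s < tau) \<and>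
     (\<forall>i<n. \<forall>s>0. acts x tau i s \<longrightarrow> x i s = 0 \<and> y i s = 1) \<and>
     (\<forall>i<n. \<forall>s>0. \<not> acts x tau i s \<longrightarrow>
         continuous (at_left s) (x i) \<and> continuous (at_left s) (y i)) \<and>
     (\<forall>i<n. \<forall>s\<ge>0.
         (x i has_real_derivative
            xrate sA sS sC muS muC (alpha i) (gamma n y i s) (x i s)) (at_right s) \<and>
         (y i has_real_derivative (- r * y i s)) (at_right s))"

end

(*
  Until an individual acts for the first time its y stays 0, since it starts at 0 and only
  decays. So as long as neither i nor j has acted, y i = y j and hence both see the same
  social signal gamma; each x k then solves the logistic equation x' = c k (1 - x) (1 + x),
  whose coefficient c k is nondecreasing in alpha k. Consequently artanh (x j) - artanh (x i)
  has right derivative c j - c i \<ge> 0 and starts at 0, so x i \<le> x j up to time t. When x i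
  reaches tau from below, x j is squeezed between x i and tau and reaches tau too.
  Trajectories are only right-differentiable, so monotonicity is derived from one-sided
  derivatives. The argument also needs the a priori bounds 0 \<le> y \<le> 1 (so that gamma \<ge> 0)
  and x > -1 (so that artanh (x k) is defined); the latter comes from a Gronwall-type estimate
  on 1 + x between resets.
*)
theory Submission
  imports Defs
begin

lemma continuous_on_Icc_if_one_sided:
  fixes f :: "real \<Rightarrow> real"
  assumes "a \<le> b"
    and left: "\<And>s. a < s \<Longrightarrow> s \<le> b \<Longrightarrow> continuous (at_left s) f"
    and right: "\<And>s. a \<le> s \<Longrightarrow> s < b \<Longrightarrow> continuous (at_right s) f"
  shows "continuous_on {a..b} f"
proof (cases "a = b")
  case True then show ?thesis by simp
next
  case False
  with \<open>a \<le> b\<close> have "a < b" by simp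
  show ?thesis
    unfolding continuous_on_eq_continuous_within
  proof
  fix s assume s: "s \<in> {a..b}"
  consider "s = a" | "s = b" | "a < s" "s < b"
    using s by fastforce
  then show "continuous (at s within {a..b}) f"
  proof cases
    case 1 then show ?thesis using right \<open>a < b\<close> by (simp add: at_within_Icc_at_right)
  next
    case 2 then show ?thesis using left \<open>a < b\<close> by (simp add: at_within_Icc_at_left)
  next
    case 3 then show ?thesis using left right by (simp add: at_within_Icc_at continuous_at_split)
  qed
  qed
qed

lemma le_if_right_derivative_pos:
  fixes f D :: "real \<Rightarrow> real"
  assumes "a \<le> b" and cont: "continuous_on {a..b} f"
    and deriv: "\<And>s. a \<le> s \<Longrightarrow> s < b \<Longrightarrow> (f has_real_derivative D s) (at_right s)"
    and pos: "\<And>s. a \<le> s \<Longrightarrow> s < b \<Longrightarrow> D s > 0"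
  shows "f a \<le> f b"
proof (rule ccontr)
  assume "\<not> f a \<le> f b"
  define S where "S = {a..b} \<inter> f -` {f a..}"
  define c where "c = Sup S"
  have "closed S"
    unfolding S_def by (rule continuous_closed_preimage[OF cont]) auto
  moreover have "a \<in> S" "bdd_above S"
    using \<open>a \<le> b\<close> by (auto simp: S_def)
  ultimately have "c \<in> S"
    unfolding c_def by (intro closed_contains_Sup) auto
  with \<open>\<not> f a \<le> f b\<close> have c: "a \<le> c" "c < b" "f a \<le> f c"
    by (auto simp: S_def less_le)
  obtain d where "d > 0" and d: "\<And>h. h > 0 \<Longrightarrow> h < d \<Longrightarrow> f c < f (c + h)"
    using has_real_derivative_pos_inc_right[OF deriv[OF c(1,2)] pos[OF c(1,2)]] by auto
  define h where "h = min (d / 2) (b - c)"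
  have "h > 0" "h < d" using \<open>d > 0\<close> c by (auto simp: h_def)
  then have "c + h \<in> S"
    using d[of h] c by (auto simp: S_def h_def)
  then have "c + h \<le> c"
    unfolding c_def using \<open>bdd_above S\<close> by (rule cSup_upper)
  with \<open>h > 0\<close> show False by simp
qed

lemma le_if_right_derivative_nonneg:
  fixes f D :: "real \<Rightarrow> real"
  assumes "a \<le> b" and cont: "continuous_on {a..b} f"
    and deriv: "\<And>s. a \<le> s \<Longrightarrow> s < b \<Longrightarrow> (f has_real_derivative D s) (at_right s)"
    and nonneg: "\<And>s. a \<le> s \<Longrightarrow> s < b \<Longrightarrow> D s \<ge> 0"
  shows "f a \<le> f b"
proof (rule field_le_epsilon)
  fix e :: real assume "e > 0"
  define k where "k = e / (b - a + 1)"
  have "k > 0" "k * (b - a) \<le> e"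
    using \<open>a \<le> b\<close> \<open>e > 0\<close> by (auto simp: k_def field_simps)
  have "f a + k * a \<le> f b + k * b"
  proof (rule le_if_right_derivative_pos[where f = "\<lambda>s. f s + k * s" and D = "\<lambda>s. D s + k"])
    show "continuous_on {a..b} (\<lambda>s. f s + k * s)"
      using cont by (intro continuous_intros)
    show "((\<lambda>s. f s + k * s) has_real_derivative D s + k) (at_right s)" if "a \<le> s" "s < b" for s
      using deriv[OF that] by (auto intro!: derivative_eq_intros)
  qed (use \<open>a \<le> b\<close> \<open>k > 0\<close> nonneg in \<open>auto intro: add_nonneg_pos\<close>)
  with \<open>k * (b - a) \<le> e\<close> show "f a \<le> f b + e"
    by (simp add: algebra_simps)
qed

lemma eq_if_right_derivative_zero:
  fixes f :: "real \<Rightarrow> real"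
  assumes "a \<le> b" and cont: "continuous_on {a..b} f"
    and deriv: "\<And>s. a \<le> s \<Longrightarrow> s < b \<Longrightarrow> (f has_real_derivative 0) (at_right s)"
  shows "f b = f a"
proof (rule antisym)
  show "f a \<le> f b"
    using le_if_right_derivative_nonneg[OF assms(1,2) deriv] by simp
  have "- f a \<le> - f b"
    by (rule le_if_right_derivative_nonneg[OF assms(1), where D = "\<lambda>_. 0"])
      (use cont deriv in \<open>auto intro!: continuous_intros derivative_eq_intros\<close>)
  then show "f b \<le> f a" by simp
qed

lemma last_time_in_closed:
  fixes f :: "real \<Rightarrow> real" and C :: "real set"
  assumes "closed C" and "f a \<in> C" and "a < b" and "f b \<notin> C"
    and left: "\<And>s. a < s \<Longrightarrow> s \<le> b \<Longrightarrow> f s \<notin> C \<Longrightarrow> continuous (at_left s) f"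
  obtains c where "a \<le> c" "c < b" "f c \<in> C" "\<And>s. c < s \<Longrightarrow> s \<le> b \<Longrightarrow> f s \<notin> C"
proof -
  define S where "S = {s\<in>{a..b}. f s \<in> C}"
  define c where "c = Sup S"
  have "a \<in> S" "bdd_above S"
    using assms by (auto simp: S_def)
  then have "a \<le> c" "c \<le> b"
    unfolding c_def by (auto intro!: cSup_upper cSup_least simp: S_def)
  have after: "f s \<notin> C" if "c < s" "s \<le> b" for s
    using that \<open>a \<le> c\<close> cSup_upper[OF _ \<open>bdd_above S\<close>, of s] by (force simp: S_def c_def)
  have "f c \<in> C"
  proof (rule ccontr)
    assume "f c \<notin> C"
    with \<open>f a \<in> C\<close> \<open>a \<le> c\<close> \<open>c \<le> b\<close> have "a < c" "continuous (at_left c) f"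
      using left by (auto simp: less_le)
    then have "\<forall>\<^sub>F s in at_left c. f s \<in> - C"
      using \<open>f c \<notin> C\<close> \<open>closed C\<close> by (intro topological_tendstoD) (auto simp: continuous_within)
    then obtain d where "d < c" and d: "\<And>s. d < s \<Longrightarrow> s < c \<Longrightarrow> f s \<notin> C"
      unfolding eventually_at_left_field by auto
    have "c \<le> max a d"
      unfolding c_def
    proof (rule cSup_least)
      show "S \<noteq> {}" using \<open>a \<in> S\<close> by auto
      show "s \<le> max a d" if "s \<in> S" for s
        using that d[of s] \<open>f c \<notin> C\<close> cSup_upper[OF that \<open>bdd_above S\<close>]
        by (force simp: S_def c_def)
    qed
    with \<open>a < c\<close> \<open>d < c\<close> show False by simp
  qed
  with \<open>f b \<notin> C\<close> \<open>c \<le> b\<close> have "c < b" by (auto simp: less_le)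
  show thesis
    by (rule that) (use \<open>a \<le> c\<close> \<open>c < b\<close> \<open>f c \<in> C\<close> after in auto)
qed

lemma first_time_in_closed:
  fixes f :: "real \<Rightarrow> real" and C :: "real set"
  assumes "continuous_on {a..b} f" and "closed C" and "f a \<notin> C" and "f b \<in> C" and "a \<le> b"
  obtains d where "a < d" "d \<le> b" "f d \<in> C" "\<And>s. a \<le> s \<Longrightarrow> s < d \<Longrightarrow> f s \<notin> C"
proof -
  define Z where "Z = {a..b} \<inter> f -` C"
  have "closed Z"
    unfolding Z_def by (rule continuous_closed_preimage[OF assms(1)]) (auto intro: assms(2))
  moreover have "b \<in> Z" "bdd_below Z"
    using assms by (auto simp: Z_def)
  ultimately have "Inf Z \<in> Z"
    by (intro closed_contains_Inf) auto
  moreover have "Inf Z \<le> s" if "s \<in> Z" for s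
    using that \<open>bdd_below Z\<close> by (rule cInf_lower)
  ultimately show thesis
    using \<open>f a \<notin> C\<close> by (intro that[of "Inf Z"]) (force simp: Z_def less_le)+
qed

lemma exp_weighted_has_real_derivative:
  fixes f :: "real \<Rightarrow> real"
  assumes "(f has_real_derivative f') (at u within S)"
  shows "((\<lambda>v. exp (k * v) * f v) has_real_derivative exp (k * u) * (f' + k * f u)) (at u within S)"
  using assms by (auto intro!: derivative_eq_intros simp: algebra_simps)

lemma artanh_logistic_has_real_derivative:
  fixes f :: "real \<Rightarrow> real"
  assumes deriv: "(f has_real_derivative c * (1 - f u) * (1 + f u)) (at u within S)"
    and "-1 < f u" "f u < 1"
  shows "((\<lambda>v. artanh (f v)) has_real_derivative c) (at u within S)"
proof -
  have "(1 - f u) * (1 + f u) > 0"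
    using assms(2,3) by (intro mult_pos_pos) auto
  moreover have "1 - f u ^ 2 = (1 - f u) * (1 + f u)"
    by (simp add: power2_eq_square algebra_simps)
  ultimately have "1 / (1 - f u ^ 2) * (c * (1 - f u) * (1 + f u)) = c"
    using assms(2,3) by simp
  moreover have "((\<lambda>v. artanh (f v)) has_real_derivative
      1 / (1 - f u ^ 2) * (c * (1 - f u) * (1 + f u))) (at u within S)"
    by (rule DERIV_chain2[OF artanh_real_has_field_derivative deriv]) (use assms in auto)
  ultimately show ?thesis by simp
qed

lemma exp_weighted_logistic_mono:
  fixes f a :: "real \<Rightarrow> real"
  assumes "c \<le> d" and cont: "continuous_on {c..d} f"
    and deriv: "\<And>u. c \<le> u \<Longrightarrow> u < d \<Longrightarrow>
      (f has_real_derivative a u * (1 - f u) * (1 + f u)) (at_right u)"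
    and bound: "\<And>u. c \<le> u \<Longrightarrow> u < d \<Longrightarrow> \<bar>a u\<bar> \<le> M"
    and range: "\<And>u. c \<le> u \<Longrightarrow> u < d \<Longrightarrow> f u \<in> {-1..1}"
  shows "exp (2 * M * c) * (1 + f c) \<le> exp (2 * M * d) * (1 + f d)"
proof (rule le_if_right_derivative_nonneg[where f = "\<lambda>u. exp (2 * M * u) * (1 + f u)"])
  show "continuous_on {c..d} (\<lambda>u. exp (2 * M * u) * (1 + f u))"
    using cont by (intro continuous_intros)
next
  fix u assume u: "c \<le> u" "u < d"
  show "((\<lambda>u. exp (2 * M * u) * (1 + f u)) has_real_derivative
      exp (2 * M * u) * (a u * (1 - f u) * (1 + f u) + 2 * M * (1 + f u))) (at_right u)"
    by (rule exp_weighted_has_real_derivative) (auto intro!: derivative_eq_intros deriv u)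
  have "\<bar>a u * (1 - f u)\<bar> \<le> M * 2"
    unfolding abs_mult using bound[OF u] range[OF u] by (intro mult_mono) auto
  then have "0 \<le> exp (2 * M * u) * ((1 + f u) * (a u * (1 - f u) + 2 * M))"
    using range[OF u] by (intro mult_nonneg_nonneg) auto
  also have "\<dots> = exp (2 * M * u) * (a u * (1 - f u) * (1 + f u) + 2 * M * (1 + f u))"
    by (simp add: algebra_simps)
  finally show "0 \<le> exp (2 * M * u) * (a u * (1 - f u) * (1 + f u) + 2 * M * (1 + f u))" .
qed fact

lemma artanh_real_le_iff:
  fixes u v :: real
  assumes "u \<in> {-1<..<1}" "v \<in> {-1<..<1}"
  shows "artanh u \<le> artanh v \<longleftrightarrow> u \<le> v"
proof -
  have "artanh u \<le> artanh v \<longleftrightarrow> (1 + u) / (1 - u) \<le> (1 + v) / (1 - v)"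
    using assms by (simp add: artanh_def)
  also have "\<dots> \<longleftrightarrow> (1 + u) * (1 - v) \<le> (1 + v) * (1 - u)"
    using assms by (simp add: field_simps)
  also have "\<dots> \<longleftrightarrow> u \<le> v"
    by (simp add: algebra_simps)
  finally show ?thesis .
qed

definition xrate_coeff :: "real \<Rightarrow> real \<Rightarrow> real \<Rightarrow> real \<Rightarrow> real \<Rightarrow> real \<Rightarrow> real \<Rightarrow> real" where
  "xrate_coeff sA sS sC muS muC a g = (sA * a + sS * (g - muS)) * sC * (g + muC)"

lemma xrate_eq_coeff:
  "xrate sA sS sC muS muC a g xv = xrate_coeff sA sS sC muS muC a g * (1 - xv) * (1 + xv)"
  by (simp add: xrate_def xrate_coeff_def)

lemma abs_xrate_coeff_le:
  assumes "sA \<ge> 0" "sS \<ge> 0" "sC > 0" "0 \<le> muS" "muS \<le> 1" "muC > 0"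
    and "-1 < a" "a < 1" "0 \<le> g" "g \<le> 1"
  shows "\<bar>xrate_coeff sA sS sC muS muC a g\<bar> \<le> (sA + sS) * sC * (1 + muC)"
proof -
  have "\<bar>sA * a\<bar> \<le> sA" "\<bar>sS * (g - muS)\<bar> \<le> sS"
    using assms by (auto simp: abs_mult abs_le_iff intro: mult_left_le)
  then have "\<bar>sA * a + sS * (g - muS)\<bar> \<le> sA + sS"
    by linarith
  moreover have "\<bar>g + muC\<bar> \<le> 1 + muC"
    using assms by simp
  ultimately show ?thesis
    using assms unfolding xrate_coeff_def abs_mult by (intro mult_mono) auto
qed

lemma xrate_coeff_mono:
  assumes "sA \<ge> 0" "sC \<ge> 0" "g + muC \<ge> 0" "a \<le> a'"
  shows "xrate_coeff sA sS sC muS muC a g \<le> xrate_coeff sA sS sC muS muC a' g"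
proof -
  have "xrate_coeff sA sS sC muS muC a' g - xrate_coeff sA sS sC muS muC a g
      = sA * (a' - a) * sC * (g + muC)"
    by (simp add: xrate_coeff_def algebra_simps)
  also have "\<dots> \<ge> 0"
    using assms by simp
  finally show ?thesis by simp
qed

lemma gamma_cong:
  assumes "i < n" "j < n" "y i s = y j s"
  shows "gamma n y i s = gamma n y j s"
  using assms by (simp add: gamma_def sum_diff1)

lemma gamma_bounds:
  assumes "n \<ge> 2" "k < n" and y: "\<And>j. j < n \<Longrightarrow> 0 \<le> y j s \<and> y j s \<le> 1"
  shows "0 \<le> gamma n y k s \<and> gamma n y k s \<le> 1"
proof -
  let ?A = "{..<n} - {k}"
  have "0 \<le> (\<Sum>j\<in>?A. y j s)"
    using y by (intro sum_nonneg) auto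
  moreover have "(\<Sum>j\<in>?A. y j s) \<le> real (card ?A)"
    using y sum_bounded_above[of ?A "\<lambda>j. y j s" 1] by auto
  moreover have "real (card ?A) = real n - 1" "real n - 1 > 0"
    using assms(1,2) by auto
  ultimately show ?thesis
    unfolding gamma_def by (auto simp: field_simps)
qed

locale trajectory_from_zero =
  fixes n :: nat and sA sS sC muS muC r tau :: real
    and alpha :: "nat \<Rightarrow> real" and x y :: "nat \<Rightarrow> real \<Rightarrow> real"
  assumes n_ge_2: "n \<ge> 2"
    and sA_nonneg: "sA \<ge> 0" and sS_nonneg: "sS \<ge> 0" and sC_pos: "sC > 0"
    and muS_nonneg: "0 \<le> muS" and muS_le_1: "muS \<le> 1" and muC_pos: "muC > 0"
    and r_pos: "r > 0" and tau_lt_1: "tau < 1"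
    and alpha_bounds: "\<And>k. k < n \<Longrightarrow> -1 < alpha k \<and> alpha k < 1"
    and traj: "trajectory n sA sS sC muS muC r tau alpha (\<lambda>_. 0) (\<lambda>_. 0) x y"
begin

lemma initial_state: "k < n \<Longrightarrow> x k 0 = 0 \<and> y k 0 = 0"
  using traj by (simp add: trajectory_def)

lemma x_lt_tau: "k < n \<Longrightarrow> 0 \<le> s \<Longrightarrow> x k s < tau"
  using traj by (simp add: trajectory_def)

lemma state_at_action: "k < n \<Longrightarrow> acts x tau k s \<Longrightarrow> x k s = 0 \<and> y k s = 1"
  using traj by (simp add: trajectory_def acts_def)

lemma continuous_at_left_unless_acts:
  "k < n \<Longrightarrow> 0 < s \<Longrightarrow> \<not> acts x tau k s \<Longrightarrow>
    continuous (at_left s) (x k) \<and> continuous (at_left s) (y k)"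
  using traj by (simp add: trajectory_def)

lemma x_has_right_derivative:
  "k < n \<Longrightarrow> 0 \<le> s \<Longrightarrow> (x k has_real_derivative
     xrate_coeff sA sS sC muS muC (alpha k) (gamma n y k s) * (1 - x k s) * (1 + x k s)) (at_right s)"
  using traj by (simp add: trajectory_def xrate_eq_coeff)

lemma y_has_right_derivative:
  "k < n \<Longrightarrow> 0 \<le> s \<Longrightarrow> (y k has_real_derivative - r * y k s) (at_right s)"
  using traj by (simp add: trajectory_def)

lemma continuous_on_without_action:
  assumes "k < n" "0 \<le> a" "a \<le> b" "\<And>s. a < s \<Longrightarrow> s \<le> b \<Longrightarrow> \<not> acts x tau k s"
  shows "continuous_on {a..b} (x k) \<and> continuous_on {a..b} (y k)"
  using assms continuous_at_left_unless_acts
    DERIV_continuous[OF x_has_right_derivative] DERIV_continuous[OF y_has_right_derivative]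
  by (auto intro!: continuous_on_Icc_if_one_sided)

lemma y_decay:
  assumes "k < n" "0 \<le> a" "a \<le> b" "\<And>s. a < s \<Longrightarrow> s \<le> b \<Longrightarrow> \<not> acts x tau k s"
  shows "y k b = exp (- r * (b - a)) * y k a"
proof -
  have "exp (r * b) * y k b = exp (r * a) * y k a"
  proof (rule eq_if_right_derivative_zero[where f = "\<lambda>v. exp (r * v) * y k v"])
    show "continuous_on {a..b} (\<lambda>v. exp (r * v) * y k v)"
      using continuous_on_without_action[OF assms] by (intro continuous_intros) auto
    show "((\<lambda>v. exp (r * v) * y k v) has_real_derivative 0) (at_right s)" if "a \<le> s" "s < b" for s
      using exp_weighted_has_real_derivative[OF y_has_right_derivative, of k s r] that assms
      by simp
  qed fact
  then show ?thesis
    by (simp add: algebra_simps exp_diff field_simps)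
qed

lemma y_bounds:
  assumes "k < n" "0 \<le> s"
  shows "0 \<le> y k s \<and> y k s \<le> 1"
proof (rule ccontr)
  assume out: "\<not> (0 \<le> y k s \<and> y k s \<le> 1)"
  with initial_state[OF \<open>k < n\<close>] \<open>0 \<le> s\<close> have "0 < s" by (auto simp: less_le)
  have quiet: "\<not> acts x tau k u" if "y k u \<notin> {0..1}" for u
    using state_at_action[OF \<open>k < n\<close>] that by auto
  obtain c where c: "0 \<le> c" "c < s" "y k c \<in> {0..1}"
    and after: "\<And>u. c < u \<Longrightarrow> u \<le> s \<Longrightarrow> y k u \<notin> {0..1}"
    by (rule last_time_in_closed[of "{0..1}" "y k" 0 s])
      (use initial_state[OF \<open>k < n\<close>] \<open>0 < s\<close> out quiet continuous_at_left_unless_acts[OF \<open>k < n\<close>]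
        in auto)
  have "y k s = exp (- r * (s - c)) * y k c"
    by (rule y_decay) (use assms c after quiet in auto)
  moreover have "exp (- r * (s - c)) \<le> 1"
    using r_pos c by simp
  ultimately have "0 \<le> y k s \<and> y k s \<le> 1"
    using c by (auto intro: mult_le_one)
  with out show False by simp
qed

lemma gamma_bounds_on_trajectory:
  "k < n \<Longrightarrow> 0 \<le> s \<Longrightarrow> 0 \<le> gamma n y k s \<and> gamma n y k s \<le> 1"
  using gamma_bounds[OF n_ge_2] y_bounds by blast

lemma x_gt_minus_one:
  assumes "k < n" "0 \<le> s"
  shows "-1 < x k s"
proof (rule ccontr)
  assume "\<not> -1 < x k s"
  then have low: "x k s \<in> {..-1}" by simp
  with initial_state[OF \<open>k < n\<close>] \<open>0 \<le> s\<close> have "0 < s" by (auto simp: less_le)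
  have quiet: "\<not> acts x tau k u" if "x k u \<notin> {0..}" for u
    using state_at_action[OF \<open>k < n\<close>] that by auto
  obtain c where c: "0 \<le> c" "c < s" "x k c \<in> {0..}"
    and after: "\<And>u. c < u \<Longrightarrow> u \<le> s \<Longrightarrow> x k u \<notin> {0..}"
    by (rule last_time_in_closed[of "{0..}" "x k" 0 s])
      (use initial_state[OF \<open>k < n\<close>] \<open>0 < s\<close> low quiet continuous_at_left_unless_acts[OF \<open>k < n\<close>]
        in auto)
  have cont: "continuous_on {c..s} (x k)"
    using continuous_on_without_action[OF \<open>k < n\<close> c(1)] c after quiet by auto
  obtain d where d: "c < d" "d \<le> s" "x k d \<in> {..-1}"
    and above: "\<And>u. c \<le> u \<Longrightarrow> u < d \<Longrightarrow> x k u \<notin> {..-1}"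
    by (rule first_time_in_closed[OF cont closed_atMost, of "-1"]) (use c low in auto)
  define M where "M = (sA + sS) * sC * (1 + muC)"
  have "exp (2 * M * c) * (1 + x k c) \<le> exp (2 * M * d) * (1 + x k d)"
  proof (rule exp_weighted_logistic_mono[OF _ continuous_on_subset[OF cont]])
    fix u assume u: "c \<le> u" "u < d"
    with c have "0 \<le> u" by simp
    show "(x k has_real_derivative xrate_coeff sA sS sC muS muC (alpha k) (gamma n y k u)
        * (1 - x k u) * (1 + x k u)) (at_right u)"
      using x_has_right_derivative[OF \<open>k < n\<close> \<open>0 \<le> u\<close>] .
    show "\<bar>xrate_coeff sA sS sC muS muC (alpha k) (gamma n y k u)\<bar> \<le> M"
      unfolding M_def
      using abs_xrate_coeff_le sA_nonneg sS_nonneg sC_pos muS_nonneg muS_le_1 muC_pos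
        alpha_bounds[OF \<open>k < n\<close>] gamma_bounds_on_trajectory[OF \<open>k < n\<close> \<open>0 \<le> u\<close>] by blast
    show "x k u \<in> {-1..1}"
      using above[OF u] x_lt_tau[OF \<open>k < n\<close> \<open>0 \<le> u\<close>] tau_lt_1 by auto
  qed (use d in auto)
  moreover have "exp (2 * M * c) * (1 + x k c) > 0" "exp (2 * M * d) * (1 + x k d) \<le> 0"
    using c d by (auto simp: mult_nonneg_nonpos)
  ultimately show False by simp
qed

lemma y_zero_before_first_action:
  assumes "k < n" "\<And>u. u < t \<Longrightarrow> \<not> acts x tau k u" "0 \<le> s" "s < t"
  shows "y k s = 0"
  using y_decay[of k 0 s] initial_state assms by auto

lemma x_le_before_first_actions:
  assumes "i < n" "j < n" "alpha i \<le> alpha j"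
    and "\<And>u. u < t \<Longrightarrow> \<not> acts x tau i u" "\<And>u. u < t \<Longrightarrow> \<not> acts x tau j u"
    and "0 \<le> s" "s < t"
  shows "x i s \<le> x j s"
proof -
  have inside: "x k u \<in> {-1<..<1}" if "k < n" "0 \<le> u" for k u
    using x_gt_minus_one[OF that] x_lt_tau[OF that] tau_lt_1 by auto
  have "artanh (x j 0) - artanh (x i 0) \<le> artanh (x j s) - artanh (x i s)"
  proof (rule le_if_right_derivative_nonneg[where f = "\<lambda>u. artanh (x j u) - artanh (x i u)"])
    show "continuous_on {0..s} (\<lambda>u. artanh (x j u) - artanh (x i u))"
      using continuous_on_without_action[of _ 0 s] inside assms by (intro continuous_intros) auto
  next
    fix u assume u: "0 \<le> u" "u < s"
    let ?coeff = "\<lambda>k. xrate_coeff sA sS sC muS muC (alpha k) (gamma n y i u)"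
    have "gamma n y j u = gamma n y i u"
      using gamma_cong y_zero_before_first_action assms u by (metis order.strict_trans)
    then have "((\<lambda>v. artanh (x k v)) has_real_derivative ?coeff k) (at_right u)" if "k \<in> {i, j}" for k
      using that assms inside[of k u] x_has_right_derivative[of k u] u
      by (auto intro!: artanh_logistic_has_real_derivative)
    then show "((\<lambda>u. artanh (x j u) - artanh (x i u)) has_real_derivative ?coeff j - ?coeff i) (at_right u)"
      by (auto intro: DERIV_diff)
    have "0 \<le> gamma n y i u"
      using gamma_bounds_on_trajectory assms u by simp
    then show "0 \<le> ?coeff j - ?coeff i"
      using xrate_coeff_mono sA_nonneg sC_pos muC_pos assms by simp
  qed (use assms in simp)
  then have "artanh (x i s) \<le> artanh (x j s)"
    using initial_state assms by simp
  then show ?thesis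
    using artanh_real_le_iff[OF inside[OF \<open>i < n\<close> \<open>0 \<le> s\<close>] inside[OF \<open>j < n\<close> \<open>0 \<le> s\<close>]] by simp
qed

end

theorem proposition3:
  fixes n :: nat and sA sS sC muS muC r tau :: real
    and alpha :: "nat \<Rightarrow> real" and x y :: "nat \<Rightarrow> real \<Rightarrow> real"
    and i :: nat and t :: real
  assumes "n \<ge> 2"
    and "sA \<ge> 0" and "sS \<ge> 0" and "sC > 0"
    and "0 \<le> muS" and "muS \<le> 1" and "muC > 0" and "r > 0"
    and "0 < tau" and "tau < 1"
    and "\<forall>j<n. -1 < alpha j \<and> alpha j < 1"
    and "trajectory n sA sS sC muS muC r tau alpha (\<lambda>_. 0) (\<lambda>_. 0) x y"
    and "i < n" and "\<forall>j<n. alpha i \<le> alpha j"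
    and "acts x tau i t" and "\<forall>s<t. \<not> acts x tau i s"
  shows "\<forall>j<n. \<exists>s\<le>t. acts x tau j s"
proof (intro allI impI)
  interpret trajectory_from_zero n sA sS sC muS muC r tau alpha x y
    using assms by unfold_locales auto
  fix j assume "j < n"
  show "\<exists>s\<le>t. acts x tau j s"
  proof (cases "\<exists>s<t. acts x tau j s")
    case True
    then show ?thesis by (auto intro: less_imp_le)
  next
    case False
    from \<open>acts x tau i t\<close> have "0 < t" and i_limit: "(x i \<longlongrightarrow> tau) (at_left t)"
      by (simp_all add: acts_def)
    have "\<forall>\<^sub>F u in at_left t. x i u \<le> x j u \<and> x j u \<le> tau"
      using eventually_at_left_real[OF \<open>0 < t\<close>]
    proof eventually_elim
      case (elim u)
      then show ?case
        using x_le_before_first_actions[of i j t u] x_lt_tau[of j u] False assms \<open>j < n\<close> by auto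
    qed
    then have "(x j \<longlongrightarrow> tau) (at_left t)"
      by (intro tendsto_sandwich[OF _ _ i_limit tendsto_const]) (auto elim: eventually_mono)
    with \<open>0 < t\<close> show ?thesis
      by (auto simp: acts_def)
  qed
qed

end
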